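(* Let $\hat T=\exp\big(K_x\sum_{x\text{-links}}\hat\sigma^x_v\hat\sigma^x_w\big)\exp\big(K_y\sum_{y\text{-links}}\hat\sigma^y_v\hat\sigma^y_w\big)\exp\big(K_z\sum_{z\text{-links}}\hat\sigma^z_v\hat\sigma^z_w\big)$, acting on $(\mathbb{C}^2)^{\otimes V}$ with one qubit per vertex of $G$ and Pauli matrices $\hat\sigma^\alpha_v$. Let $K_x,K_y,K_z\in\mathbb{C}$ and suppose $\beta J_\perp,\beta h\in\mathbb{C}$ satisfy $4\beta J_\perp\equiv\pi i\pmod{2\pi i}$ and $2\beta h\equiv\pi i/2\pmod{2\pi i}$. Then $$\mathrm{Tr}[\hat T^M]=c\;Z(K_x,K_y,K_z,\beta J_\perp,\beta h)$$ for a nonzero constant $c$ depending only on $M,N,\beta J_\perp,\beta h$ (not on $K_x,K_y,K_z$). In particular, for $\beta J_\perp=\beta h=\pi i/4$ one has $c=(2^{-1/2}e^{3\pi i/4})^{12MN}$.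
   Context: Let $G$ be the brick-wall graph: integers $L_x,L_y\ge1$, $N=L_xL_y$, $\Gamma=\mathbb{Z}_{L_x}\times\mathbb{Z}_{L_y}$, $e_x=(1,0)$, $e_y=(0,1)$; vertex set $V=\Gamma\times\{0,1,2,3\}$; edges for all $r\in\Gamma$: $x$-links $\{(r,0),(r,1)\},\{(r,2),(r,3)\}$; $y$-links $\{(r,0),(r-e_y,1)\},\{(r,2),(r+e_y,3)\}$; $z$-links $\{(r,2),(r,1)\},\{(r,0),(r-e_x,3)\}$. The 3D lattice has $3M$ planes indexed by $t\in\mathbb{Z}_{3M}$, each a copy of $V$; plane $t$ has type $x$, $y$, $z$ according as $t\equiv0,1,2\pmod 3$. Classical spins $\sigma_{t,v}\in\{\pm1\}$. Horizontal links: in a plane of type $\alpha$, pairs $\{(t,v),(t,w)\}$ with $\{v,w\}$ an $\alpha$-link of $G$; denote the set of these over all planes of type $\alpha$ by $\mathbf X,\mathbf Y,\mathbf Z$ for $\alpha=x,y,z$. Vertical links $\boldsymbol\perp$: all pairs $\{(t,v),(t+1,v)\}$. With $K_\alpha=\beta J_\alpha$, $$Z(K_x,K_y,K_z,\beta J_\perp,\beta h)=\sum_{\{\sigma\}}\exp\Big(\sum_{\alpha\in\{x,y,z\}}K_\alpha\!\!\sum_{\langle ij\rangle\in\mathbf{A}_\alpha}\!\!\sigma_i\sigma_j+\beta J_\perp\!\!\sum_{\langle ij\rangle\in\boldsymbol\perp}\!\!\sigma_i\sigma_j-\beta h\sum_i\sigma_i\Big),$$ with $\mathbf A_x=\mathbf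 X,\mathbf A_y=\mathbf Y,\mathbf A_z=\mathbf Z$. *)

theory Defs
  imports "HOL-Analysis.Analysis"
begin

text \<open>Vertices (a,b,k) with a < Lx, b < Ly (an element of Z_Lx x Z_Ly) and k < 4.\<close>
type_synonym vtx = "nat \<times> nat \<times> nat"

datatype axis = AX | AY | AZ

definition verts :: "nat \<Rightarrow> nat \<Rightarrow> vtx set" where
  "verts Lx Ly = {(a,b,k). a < Lx \<and> b < Ly \<and> k < 4}"

text \<open>Edges of G of each type, as (ordered) pairs of vertices; each edge listed once.
  Shifts r - e_x, r + e_y, r - e_y are taken modulo Lx resp. Ly.\<close>
definition links :: "nat \<Rightarrow> nat \<Rightarrow> axis \<Rightarrow> (vtx \<times> vtx) set" where
  "links Lx Ly \<alpha> = (case \<alpha> of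
     AX \<Rightarrow> (\<Union>a\<in>{..<Lx}. \<Union>b\<in>{..<Ly}.
             {((a,b,0),(a,b,1)), ((a,b,2),(a,b,3))})
   | AY \<Rightarrow> (\<Union>a\<in>{..<Lx}. \<Union>b\<in>{..<Ly}.
             {((a,b,0),(a,(b + Ly - 1) mod Ly,1)), ((a,b,2),(a,(b + 1) mod Ly,3))})
   | AZ \<Rightarrow> (\<Union>a\<in>{..<Lx}. \<Union>b\<in>{..<Ly}.
             {((a,b,2),(a,b,1)), ((a,b,0),((a + Lx - 1) mod Lx,b,3))}))"

text \<open>Computational basis states: functions s : V -> bool (True = |1>), extended by False
  outside V.  Operators are matrices in this basis: A t s = <t|A|s>.\<close>
type_synonym 'v op = "('v \<Rightarrow> bool) \<Rightarrow> ('v \<Rightarrow> bool) \<Rightarrow> complex"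

definition basis :: "'v set \<Rightarrow> ('v \<Rightarrow> bool) set" where
  "basis Vs = {s. \<forall>v. v \<notin> Vs \<longrightarrow> s v = False}"

definition op_mult :: "'v set \<Rightarrow> 'v op \<Rightarrow> 'v op \<Rightarrow> 'v op" where
  "op_mult Vs A B = (\<lambda>t s. \<Sum>u\<in>basis Vs. A t u * B u s)"

definition op_id :: "'v op" where
  "op_id = (\<lambda>t s. if t = s then 1 else 0)"

definition op_add :: "'v op \<Rightarrow> 'v op \<Rightarrow> 'v op" where
  "op_add A B = (\<lambda>t s. A t s + B t s)"

definition op_scale :: "complex \<Rightarrow> 'v op \<Rightarrow> 'v op" where
  "op_scale c A = (\<lambda>t s. c * A t s)"

fun op_pow :: "'v set \<Rightarrow> 'v op \<Rightarrow> nat \<Rightarrow> 'v op" where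
  "op_pow Vs A 0 = op_id"
| "op_pow Vs A (Suc k) = op_mult Vs (op_pow Vs A k) A"

definition op_exp :: "'v set \<Rightarrow> 'v op \<Rightarrow> 'v op" where
  "op_exp Vs A = (\<lambda>t s. (\<Sum>k. op_pow Vs A k t s / of_nat (fact k)))"

definition op_trace :: "'v set \<Rightarrow> 'v op \<Rightarrow> complex" where
  "op_trace Vs A = (\<Sum>s\<in>basis Vs. A s s)"

text \<open>Single-qubit Pauli matrices, entry (out, in), with False = |0>, True = |1>.\<close>
fun pauli :: "axis \<Rightarrow> bool \<Rightarrow> bool \<Rightarrow> complex" where
  "pauli AX t s = (if t \<noteq> s then 1 else 0)"
| "pauli AY t s = (if t \<and> \<not> s then \<i> else if \<not> t \<and> s then - \<i> else 0)"
| "pauli AZ t s = (if t = s then (if s then -1 else 1) else 0)"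

definition pauli_at :: "axis \<Rightarrow> 'v \<Rightarrow> 'v op" where
  "pauli_at \<alpha> v = (\<lambda>t s. pauli \<alpha> (t v) (s v) * (if \<forall>u. u \<noteq> v \<longrightarrow> t u = s u then 1 else 0))"

definition link_sum :: "nat \<Rightarrow> nat \<Rightarrow> axis \<Rightarrow> vtx op" where
  "link_sum Lx Ly \<alpha> = (\<lambda>t s. \<Sum>(v,w)\<in>links Lx Ly \<alpha>.
      op_mult (verts Lx Ly) (pauli_at \<alpha> v) (pauli_at \<alpha> w) t s)"

definition transfer :: "nat \<Rightarrow> nat \<Rightarrow> complex \<Rightarrow> complex \<Rightarrow> complex \<Rightarrow> vtx op" where
  "transfer Lx Ly Kx Ky Kz =
     (let Vs = verts Lx Ly in
      op_mult Vs (op_mult Vs (op_exp Vs (op_scale Kx (link_sum Lx Ly AX)))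
                             (op_exp Vs (op_scale Ky (link_sum Lx Ly AY))))
                 (op_exp Vs (op_scale Kz (link_sum Lx Ly AZ))))"

definition plane_type :: "nat \<Rightarrow> axis" where
  "plane_type t = (if t mod 3 = 0 then AX else if t mod 3 = 1 then AY else AZ)"

definition coupling :: "complex \<Rightarrow> complex \<Rightarrow> complex \<Rightarrow> axis \<Rightarrow> complex" where
  "coupling Kx Ky Kz \<alpha> = (case \<alpha> of AX \<Rightarrow> Kx | AY \<Rightarrow> Ky | AZ \<Rightarrow> Kz)"

text \<open>Sites (t, v) with t in Z_{3M} (represented by t < 3M) and v in V.\<close>
definition sites :: "nat \<Rightarrow> nat \<Rightarrow> nat \<Rightarrow> (nat \<times> vtx) set" where
  "sites Lx Ly M = {..<3*M} \<times> verts Lx Ly"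

definition spin_configs :: "nat \<Rightarrow> nat \<Rightarrow> nat \<Rightarrow> (nat \<times> vtx \<Rightarrow> int) set" where
  "spin_configs Lx Ly M = {\<sigma>. (\<forall>i\<in>sites Lx Ly M. \<sigma> i \<in> {-1, 1}) \<and>
                                (\<forall>i. i \<notin> sites Lx Ly M \<longrightarrow> \<sigma> i = 1)}"

definition energy :: "nat \<Rightarrow> nat \<Rightarrow> nat \<Rightarrow> complex \<Rightarrow> complex \<Rightarrow> complex \<Rightarrow> complex \<Rightarrow> complex
                      \<Rightarrow> (nat \<times> vtx \<Rightarrow> int) \<Rightarrow> complex" where
  "energy Lx Ly M Kx Ky Kz bJ bh \<sigma> =
     (\<Sum>t<3*M. coupling Kx Ky Kz (plane_type t) *
        (\<Sum>(v,w)\<in>links Lx Ly (plane_type t). of_int (\<sigma> (t,v) * \<sigma> (t,w))))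
     + bJ * (\<Sum>t<3*M. \<Sum>v\<in>verts Lx Ly. of_int (\<sigma> (t,v) * \<sigma> ((t + 1) mod (3*M), v)))
     - bh * (\<Sum>i\<in>sites Lx Ly M. of_int (\<sigma> i))"

definition partition_fn :: "nat \<Rightarrow> nat \<Rightarrow> nat \<Rightarrow> complex \<Rightarrow> complex \<Rightarrow> complex \<Rightarrow> complex \<Rightarrow> complex
                            \<Rightarrow> complex" where
  "partition_fn Lx Ly M Kx Ky Kz bJ bh =
     (\<Sum>\<sigma>\<in>spin_configs Lx Ly M. exp (energy Lx Ly M Kx Ky Kz bJ bh \<sigma>))"

end

theory Submission
  imports Defs
begin

text \<open>Each Pauli coupling \<open>\<Sum> \<sigma>\<^sup>\<alpha>\<^sub>v \<sigma>\<^sup>\<alpha>\<^sub>w\<close> is diagonalised by a product unitary \<open>U\<^sub>\<alpha>\<close>, so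
  that \<open>exp (K\<^sub>\<alpha> H\<^sub>\<alpha>) = U\<^sub>\<alpha> D\<^sub>\<alpha> U\<^sub>\<alpha>\<^sup>\<dagger>\<close> with \<open>D\<^sub>\<alpha>\<close> the diagonal Boltzmann weight of a plane of
  type \<open>\<alpha>\<close>.  The unitaries can be chosen so that all three overlaps \<open>U\<^sub>x\<^sup>\<dagger>U\<^sub>y\<close>, \<open>U\<^sub>y\<^sup>\<dagger>U\<^sub>z\<close>,
  \<open>U\<^sub>z\<^sup>\<dagger>U\<^sub>x\<close> are the tensor power of one \<open>2 \<times> 2\<close> matrix, which is a constant multiple of the
  vertical Boltzmann weight \<open>exp (\<beta>J\<^sub>\<perp> s s' - \<beta>h (s + s')/2)\<close> at \<open>\<beta>J\<^sub>\<perp> = \<beta>h = \<pi>i/4\<close>.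
  Expanding \<open>Tr T\<^sup>M\<close> over intermediate basis states therefore yields that constant to the
  power \<open>12MN\<close> times \<open>Z\<close> at \<open>\<beta>J\<^sub>\<perp> = \<beta>h = \<pi>i/4\<close>.  Other admissible \<open>\<beta>J\<^sub>\<perp>, \<beta>h\<close> change the
  exponent of every Boltzmann weight by an integer multiple of \<open>\<pi>i/2 \<Sum>\<sigma>\<sigma>'\<close> resp. \<open>\<pi>i \<Sum>\<sigma>\<close>,
  whose exponentials are \<open>i\<^sup>1\<^sup>2\<^sup>M\<^sup>N = 1\<close> and \<open>(-1)\<^sup>1\<^sup>2\<^sup>M\<^sup>N = 1\<close>.\<close>

section \<open>Operators up to equality on basis states\<close>

lemma finite_basis: "finite Vs \<Longrightarrow> finite (basis Vs)"
proof -
  assume "finite Vs"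
  moreover have "basis Vs \<subseteq> (\<lambda>A v. v \<in> A) ` Pow Vs"
  proof
    fix s assume "s \<in> basis Vs"
    then have "s = (\<lambda>v. v \<in> {v \<in> Vs. s v})" by (auto simp: basis_def)
    then show "s \<in> (\<lambda>A v. v \<in> A) ` Pow Vs" by blast
  qed
  ultimately show ?thesis by (meson finite_Pow_iff finite_imageI finite_subset)
qed

lemma basis_eq_iff: "t \<in> basis Vs \<Longrightarrow> s \<in> basis Vs \<Longrightarrow> t = s \<longleftrightarrow> (\<forall>v\<in>Vs. t v = s v)"
  by (auto simp: basis_def fun_eq_iff)

text \<open>An operator assigns entries to all pairs of functions \<open>'v \<Rightarrow> bool\<close>, but only the entries
  between basis states are meaningful; \<open>op_eq\<close> compares exactly those.\<close>

definition op_eq :: "'v set \<Rightarrow> 'v op \<Rightarrow> 'v op \<Rightarrow> bool" where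
  "op_eq Vs A B \<longleftrightarrow> (\<forall>t\<in>basis Vs. \<forall>s\<in>basis Vs. A t s = B t s)"

lemma op_eq_refl [simp]: "op_eq Vs A A"
  by (simp add: op_eq_def)

lemma op_eq_sym: "op_eq Vs A B \<Longrightarrow> op_eq Vs B A"
  by (simp add: op_eq_def)

lemma op_eq_trans [trans]: "op_eq Vs A B \<Longrightarrow> op_eq Vs B C \<Longrightarrow> op_eq Vs A C"
  and op_eq_subst_left [trans]: "A = B \<Longrightarrow> op_eq Vs B C \<Longrightarrow> op_eq Vs A C"
  and op_eq_subst_right [trans]: "op_eq Vs A B \<Longrightarrow> B = C \<Longrightarrow> op_eq Vs A C"
  by (simp_all add: op_eq_def)

lemma op_mult_cong: "op_eq Vs A A' \<Longrightarrow> op_eq Vs B B' \<Longrightarrow> op_eq Vs (op_mult Vs A B) (op_mult Vs A' B')"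
  by (simp add: op_eq_def op_mult_def)

lemma op_pow_cong: "op_eq Vs A B \<Longrightarrow> op_eq Vs (op_pow Vs A k) (op_pow Vs B k)"
  by (induction k) (auto intro: op_mult_cong)

lemma op_exp_cong: "op_eq Vs A B \<Longrightarrow> op_eq Vs (op_exp Vs A) (op_exp Vs B)"
  using op_pow_cong[of Vs A B] by (simp add: op_eq_def op_exp_def)

lemma op_scale_cong: "op_eq Vs A B \<Longrightarrow> op_eq Vs (op_scale c A) (op_scale c B)"
  by (simp add: op_eq_def op_scale_def)

lemma op_trace_cong: "op_eq Vs A B \<Longrightarrow> op_trace Vs A = op_trace Vs B"
  by (simp add: op_eq_def op_trace_def)

lemma op_mult_assoc: "op_mult Vs (op_mult Vs A B) C = op_mult Vs A (op_mult Vs B C)"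
proof (intro ext)
  fix t s
  have "op_mult Vs (op_mult Vs A B) C t s = (\<Sum>u\<in>basis Vs. \<Sum>w\<in>basis Vs. A t w * B w u * C u s)"
    by (simp add: op_mult_def sum_distrib_right)
  also have "\<dots> = (\<Sum>w\<in>basis Vs. \<Sum>u\<in>basis Vs. A t w * B w u * C u s)"
    by (rule sum.swap)
  also have "\<dots> = op_mult Vs A (op_mult Vs B C) t s"
    by (simp add: op_mult_def sum_distrib_left mult.assoc)
  finally show "op_mult Vs (op_mult Vs A B) C t s = op_mult Vs A (op_mult Vs B C) t s" .
qed

lemma op_mult_id_left: "finite Vs \<Longrightarrow> op_eq Vs (op_mult Vs op_id A) A"
  and op_mult_id_right: "finite Vs \<Longrightarrow> op_eq Vs (op_mult Vs A op_id) A"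
  by (simp_all add: op_eq_def op_mult_def op_id_def finite_basis if_distrib[where f="\<lambda>x. x * _"]
      if_distrib[where f="\<lambda>x. _ * x"] cong: if_cong)

lemma op_trace_mult_commute: "op_trace Vs (op_mult Vs A B) = op_trace Vs (op_mult Vs B A)"
  unfolding op_trace_def op_mult_def by (subst sum.swap) (simp add: mult.commute)

lemma op_trace_conj:
  assumes fin: "finite Vs" and WU: "op_eq Vs (op_mult Vs W U) op_id"
  shows "op_trace Vs (op_mult Vs U (op_mult Vs P W)) = op_trace Vs P"
proof -
  have "op_trace Vs (op_mult Vs U (op_mult Vs P W)) = op_trace Vs (op_mult Vs P (op_mult Vs W U))"
    by (simp add: op_trace_mult_commute[of Vs U] op_mult_assoc)
  also have "\<dots> = op_trace Vs (op_mult Vs P op_id)"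
    by (intro op_trace_cong op_mult_cong op_eq_refl WU)
  also have "\<dots> = op_trace Vs P"
    by (intro op_trace_cong op_mult_id_right fin)
  finally show ?thesis .
qed

lemma op_pow_conj:
  assumes fin: "finite Vs" and WU: "op_eq Vs (op_mult Vs W U) op_id"
    and UW: "op_eq Vs (op_mult Vs U W) op_id"
  shows "op_eq Vs (op_pow Vs (op_mult Vs U (op_mult Vs G W)) k) (op_mult Vs U (op_mult Vs (op_pow Vs G k) W))"
proof (induction k)
  case 0
  have "op_eq Vs op_id (op_mult Vs U W)"
    using UW by (rule op_eq_sym)
  also have "op_eq Vs \<dots> (op_mult Vs U (op_mult Vs op_id W))"
    by (intro op_mult_cong op_eq_refl op_eq_sym[OF op_mult_id_left[OF fin]])
  finally show ?case by simp
next
  case (Suc k)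
  let ?m = "op_mult Vs"
  have "op_eq Vs (op_pow Vs (?m U (?m G W)) (Suc k)) (?m (?m U (?m (op_pow Vs G k) W)) (?m U (?m G W)))"
    using Suc by (simp add: op_mult_cong)
  also have "\<dots> = ?m U (?m (op_pow Vs G k) (?m (?m W U) (?m G W)))"
    by (simp add: op_mult_assoc)
  also have "op_eq Vs \<dots> (?m U (?m (op_pow Vs G k) (?m op_id (?m G W))))"
    by (intro op_mult_cong op_eq_refl WU)
  also have "op_eq Vs \<dots> (?m U (?m (op_pow Vs G k) (?m G W)))"
    by (intro op_mult_cong op_eq_refl op_mult_id_left fin)
  also have "\<dots> = ?m U (?m (op_pow Vs G (Suc k)) W)"
    by (simp add: op_mult_assoc)
  finally show ?case .
qed

definition diag_op :: "(('v \<Rightarrow> bool) \<Rightarrow> complex) \<Rightarrow> 'v op" where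
  "diag_op d = (\<lambda>t s. if t = s then d s else 0)"

lemma op_mult_diag_entry:
  "finite Vs \<Longrightarrow> op_mult Vs U (op_mult Vs (diag_op d) W) t s = (\<Sum>u\<in>basis Vs. U t u * d u * W u s)"
  by (simp add: op_mult_def diag_op_def finite_basis if_distrib[where f="\<lambda>x. x * _"] mult.assoc
      cong: if_cong)

lemma op_pow_diag: "finite Vs \<Longrightarrow> op_eq Vs (op_pow Vs (diag_op d) k) (diag_op (\<lambda>s. d s ^ k))"
proof (induction k)
  case 0
  then show ?case by (simp add: op_id_def diag_op_def)
next
  case (Suc k)
  then have "op_eq Vs (op_pow Vs (diag_op d) (Suc k)) (op_mult Vs (diag_op (\<lambda>s. d s ^ k)) (diag_op d))"
    by (simp add: op_mult_cong)
  also have "op_eq Vs \<dots> (diag_op (\<lambda>s. d s ^ Suc k))"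
    using Suc.prems by (simp add: op_eq_def op_mult_def diag_op_def finite_basis if_distrib[where f="\<lambda>x. x * _"]
        mult.commute cong: if_cong)
  finally show ?case .
qed

lemma op_exp_conj_diag:
  assumes fin: "finite Vs" and WU: "op_eq Vs (op_mult Vs W U) op_id"
    and UW: "op_eq Vs (op_mult Vs U W) op_id"
  shows "op_eq Vs (op_exp Vs (op_mult Vs U (op_mult Vs (diag_op d) W)))
                  (op_mult Vs U (op_mult Vs (diag_op (\<lambda>s. exp (d s))) W))"
  unfolding op_eq_def
proof (intro ballI)
  fix t s assume t: "t \<in> basis Vs" and s: "s \<in> basis Vs"
  have pow: "op_pow Vs (op_mult Vs U (op_mult Vs (diag_op d) W)) k t s
      = (\<Sum>u\<in>basis Vs. U t u * d u ^ k * W u s)" for k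
  proof -
    have "op_eq Vs (op_pow Vs (op_mult Vs U (op_mult Vs (diag_op d) W)) k)
                   (op_mult Vs U (op_mult Vs (op_pow Vs (diag_op d) k) W))"
      by (rule op_pow_conj[OF fin WU UW])
    also have "op_eq Vs \<dots> (op_mult Vs U (op_mult Vs (diag_op (\<lambda>s. d s ^ k)) W))"
      by (intro op_mult_cong op_eq_refl op_pow_diag fin)
    finally show ?thesis
      using t s fin by (simp add: op_eq_def op_mult_diag_entry)
  qed
  have exp_series: "(\<lambda>k. z ^ k / fact k) sums exp z" for z :: complex
    using exp_converges[of z] by (simp add: scaleR_conv_of_real divide_inverse mult.commute)
  have "(\<lambda>k. \<Sum>u\<in>basis Vs. U t u * (d u ^ k / fact k) * W u s) sums (\<Sum>u\<in>basis Vs. U t u * exp (d u) * W u s)"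
    by (intro sums_sum sums_mult sums_mult2 exp_series)
  then show "op_exp Vs (op_mult Vs U (op_mult Vs (diag_op d) W)) t s
      = op_mult Vs U (op_mult Vs (diag_op (\<lambda>s. exp (d s))) W) t s"
    by (simp add: op_exp_def pow op_mult_diag_entry fin sums_iff sum_divide_distrib)
qed

section \<open>Tensor products of single-qubit matrices\<close>

type_synonym qmat = "bool \<Rightarrow> bool \<Rightarrow> complex"

definition qmat_mult :: "qmat \<Rightarrow> qmat \<Rightarrow> qmat" where
  "qmat_mult f g = (\<lambda>a b. f a False * g False b + f a True * g True b)"

definition qmat_id :: qmat where
  "qmat_id = (\<lambda>a b. if a = b then 1 else 0)"

definition qmat_adj :: "qmat \<Rightarrow> qmat" where
  "qmat_adj f = (\<lambda>a b. cnj (f b a))"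

lemma qmat_eq_iff: "(f::qmat) = g \<longleftrightarrow>
    f False False = g False False \<and> f False True = g False True \<and>
    f True False = g True False \<and> f True True = g True True"
  by (auto simp: fun_eq_iff) (metis (full_types))

lemma qmat_mult_id_left [simp]: "qmat_mult qmat_id f = f"
  and qmat_mult_id_right [simp]: "qmat_mult f qmat_id = f"
  by (simp_all add: qmat_eq_iff qmat_mult_def qmat_id_def)

definition op_tensor :: "'v set \<Rightarrow> ('v \<Rightarrow> qmat) \<Rightarrow> 'v op" where
  "op_tensor Vs f = (\<lambda>t s. \<Prod>v\<in>Vs. f v (t v) (s v))"

lemma sum_basis_prod:
  fixes F :: "'v \<Rightarrow> bool \<Rightarrow> 'a::comm_semiring_1"
  assumes "finite Vs"
  shows "(\<Sum>u\<in>basis Vs. \<Prod>v\<in>Vs. F v (u v)) = (\<Prod>v\<in>Vs. F v False + F v True)"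
proof -
  have "(\<Prod>v\<in>Vs. F v False + F v True) = (\<Prod>v\<in>Vs. \<Sum>b\<in>UNIV. F v b)"
    by (simp add: UNIV_bool add.commute)
  also have "\<dots> = (\<Sum>g\<in>Vs \<rightarrow>\<^sub>E UNIV. \<Prod>v\<in>Vs. F v (g v))"
    using prod_sum_PiE[where B="\<lambda>_. UNIV" and f=F] assms by simp
  also have "\<dots> = (\<Sum>u\<in>basis Vs. \<Prod>v\<in>Vs. F v (u v))"
    by (rule sum.reindex_bij_witness[where i="\<lambda>u. restrict u Vs" and j="\<lambda>g v. v \<in> Vs \<and> g v"])
      (auto simp: basis_def fun_eq_iff PiE_def extensional_def)
  finally show ?thesis ..
qed

lemma op_tensor_mult:
  assumes "finite Vs"
  shows "op_mult Vs (op_tensor Vs f) (op_tensor Vs g) = op_tensor Vs (\<lambda>v. qmat_mult (f v) (g v))"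
proof (intro ext)
  fix t s
  have "op_mult Vs (op_tensor Vs f) (op_tensor Vs g) t s
      = (\<Sum>u\<in>basis Vs. \<Prod>v\<in>Vs. f v (t v) (u v) * g v (u v) (s v))"
    by (simp add: op_mult_def op_tensor_def prod.distrib)
  also have "\<dots> = op_tensor Vs (\<lambda>v. qmat_mult (f v) (g v)) t s"
    using sum_basis_prod[OF assms, of "\<lambda>v c. f v (t v) c * g v c (s v)"]
    by (simp add: op_tensor_def qmat_mult_def)
  finally show "op_mult Vs (op_tensor Vs f) (op_tensor Vs g) t s = op_tensor Vs (\<lambda>v. qmat_mult (f v) (g v)) t s" .
qed

lemma op_tensor_diag:
  assumes "finite Vs"
  shows "op_eq Vs (op_tensor Vs (\<lambda>v a b. if a = b then e v b else 0)) (diag_op (\<lambda>s. \<Prod>v\<in>Vs. e v (s v)))"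
  unfolding op_eq_def
proof (intro ballI)
  fix t s assume t: "t \<in> basis Vs" and s: "s \<in> basis Vs"
  show "op_tensor Vs (\<lambda>v a b. if a = b then e v b else 0) t s = diag_op (\<lambda>s. \<Prod>v\<in>Vs. e v (s v)) t s"
  proof (cases "t = s")
    case False
    then obtain v where "v \<in> Vs" "t v \<noteq> s v"
      using basis_eq_iff[OF t s] by blast
    then show ?thesis
      using False assms by (simp add: op_tensor_def diag_op_def prod_zero_iff) blast
  qed (simp add: op_tensor_def diag_op_def)
qed

lemma op_tensor_mult_eq_id:
  assumes "finite Vs" and "\<And>v. qmat_mult (f v) (g v) = qmat_id"
  shows "op_eq Vs (op_mult Vs (op_tensor Vs f) (op_tensor Vs g)) op_id"
  using op_tensor_diag[OF assms(1), of "\<lambda>_ _. 1"]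
  by (simp add: op_tensor_mult assms qmat_id_def diag_op_def op_id_def)

lemma pauli_at_tensor:
  assumes "finite Vs" and "v \<in> Vs"
  shows "op_eq Vs (pauli_at \<alpha> v) (op_tensor Vs (\<lambda>u. if u = v then pauli \<alpha> else qmat_id))"
  unfolding op_eq_def
proof (intro ballI)
  fix t s assume t: "t \<in> basis Vs" and s: "s \<in> basis Vs"
  have "op_tensor Vs (\<lambda>u. if u = v then pauli \<alpha> else qmat_id) t s
      = pauli \<alpha> (t v) (s v) * (\<Prod>u\<in>Vs - {v}. qmat_id (t u) (s u))"
    using assms by (simp add: op_tensor_def prod.remove)
  also have "(\<Prod>u\<in>Vs - {v}. qmat_id (t u) (s u)) = (if \<forall>u\<in>Vs - {v}. t u = s u then 1 else 0)"
    using assms by (auto simp: qmat_id_def prod_zero_iff)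
  also have "(\<forall>u\<in>Vs - {v}. t u = s u) \<longleftrightarrow> (\<forall>u. u \<noteq> v \<longrightarrow> t u = s u)"
    using t s by (auto simp: basis_def)
  finally show "pauli_at \<alpha> v t s = op_tensor Vs (\<lambda>u. if u = v then pauli \<alpha> else qmat_id) t s"
    by (simp add: pauli_at_def)
qed

section \<open>Diagonalising the Pauli couplings\<close>

definition spin :: "bool \<Rightarrow> int" where
  "spin b = (if b then -1 else 1)"

lemma pauli_AZ_eq: "pauli AZ = (\<lambda>a b. if a = b then of_int (spin b) else 0)"
  by (simp add: fun_eq_iff spin_def)

lemma pauli_pair_diagonalize:
  assumes fin: "finite Vs" and v: "v \<in> Vs" and w: "w \<in> Vs" and "v \<noteq> w"
    and unitary: "qmat_mult u (qmat_adj u) = qmat_id"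
    and diagonalizes: "qmat_mult u (qmat_mult (pauli AZ) (qmat_adj u)) = pauli \<alpha>"
  shows "op_eq Vs (op_mult Vs (pauli_at \<alpha> v) (pauli_at \<alpha> w))
           (op_mult Vs (op_tensor Vs (\<lambda>_. u))
              (op_mult Vs (diag_op (\<lambda>s. of_int (spin (s v) * spin (s w)))) (op_tensor Vs (\<lambda>_. qmat_adj u))))"
proof -
  define e where "e x b = (if x = v \<or> x = w then of_int (spin b) else 1 :: complex)" for x b
  have "op_eq Vs (op_mult Vs (pauli_at \<alpha> v) (pauli_at \<alpha> w))
      (op_mult Vs (op_tensor Vs (\<lambda>x. if x = v then pauli \<alpha> else qmat_id))
                  (op_tensor Vs (\<lambda>x. if x = w then pauli \<alpha> else qmat_id)))"
    by (intro op_mult_cong pauli_at_tensor fin v w)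
  also have "\<dots> = op_tensor Vs (\<lambda>x. qmat_mult u (qmat_mult (\<lambda>a b. if a = b then e x b else 0) (qmat_adj u)))"
  proof -
    have "(\<lambda>a b. if a = b then e x b else 0) = (if x = v \<or> x = w then pauli AZ else qmat_id)" for x
      by (auto simp: e_def pauli_AZ_eq qmat_id_def fun_eq_iff)
    then show ?thesis
      using \<open>v \<noteq> w\<close> unfolding op_tensor_mult[OF fin]
      by (intro arg_cong[where f="op_tensor Vs"] ext) (auto simp: diagonalizes unitary)
  qed
  also have "\<dots> = op_mult Vs (op_tensor Vs (\<lambda>_. u))
                    (op_mult Vs (op_tensor Vs (\<lambda>x a b. if a = b then e x b else 0)) (op_tensor Vs (\<lambda>_. qmat_adj u)))"
    by (simp add: op_tensor_mult fin)
  also have "op_eq Vs \<dots> (op_mult Vs (op_tensor Vs (\<lambda>_. u))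
                    (op_mult Vs (diag_op (\<lambda>s. \<Prod>x\<in>Vs. e x (s x))) (op_tensor Vs (\<lambda>_. qmat_adj u))))"
    by (intro op_mult_cong op_eq_refl op_tensor_diag fin)
  also have "(\<lambda>s. \<Prod>x\<in>Vs. e x (s x)) = (\<lambda>s. of_int (spin (s v) * spin (s w)))"
  proof
    fix s
    have "(\<Prod>x\<in>Vs. e x (s x)) = (\<Prod>x\<in>Vs. (if x = v then of_int (spin (s v)) else 1) * (if x = w then of_int (spin (s w)) else 1))"
      using \<open>v \<noteq> w\<close> by (intro prod.cong refl) (auto simp: e_def)
    then show "(\<Prod>x\<in>Vs. e x (s x)) = of_int (spin (s v) * spin (s w))"
      using fin v w by (simp add: prod.distrib)
  qed
  finally show ?thesis .
qed

text \<open>\<open>vbond\<close> is a unitary of order three and, up to the constant \<open>bond_norm\<close>, the vertical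
  Boltzmann weight at \<open>\<beta>J\<^sub>\<perp> = \<beta>h = \<pi>i/4\<close> (\<open>vbond_exp\<close>).  Because of its order, consecutive
  eigenframes in the cycle x, y, z all overlap in \<open>vbond\<close>.\<close>

definition vbond :: qmat where
  "vbond a b = (if a = b then (if a then (-1 - \<i>) / 2 else (-1 + \<i>) / 2) else \<i> / sqrt 2)"

definition phase_qmat :: qmat where
  "phase_qmat a b = (if a = b then (if a then (1 + \<i>) / sqrt 2 else 1) else 0)"

definition eigenframe :: "axis \<Rightarrow> qmat" where
  "eigenframe \<alpha> = (case \<alpha> of
      AX \<Rightarrow> qmat_mult phase_qmat vbond
    | AY \<Rightarrow> qmat_mult phase_qmat (qmat_mult vbond vbond)
    | AZ \<Rightarrow> phase_qmat)"

lemma of_real_sqrt2_sq: "complex_of_real (sqrt 2) * complex_of_real (sqrt 2) = 2"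
  and of_real_sqrt2_sq': "complex_of_real (sqrt 2) * (complex_of_real (sqrt 2) * z) = 2 * z"
  by (simp_all flip: of_real_mult mult.assoc)

lemmas qmat_computation = qmat_eq_iff qmat_mult_def qmat_id_def qmat_adj_def
  vbond_def phase_qmat_def eigenframe_def field_simps of_real_sqrt2_sq of_real_sqrt2_sq'

lemma eigenframe_unitary:
  "qmat_mult (eigenframe \<alpha>) (qmat_adj (eigenframe \<alpha>)) = qmat_id"
  "qmat_mult (qmat_adj (eigenframe \<alpha>)) (eigenframe \<alpha>) = qmat_id"
  by (cases \<alpha>; simp add: qmat_computation; (simp add: algebra_simps of_real_sqrt2_sq')?)+

lemma eigenframe_diagonalizes:
  "qmat_mult (eigenframe \<alpha>) (qmat_mult (pauli AZ) (qmat_adj (eigenframe \<alpha>))) = pauli \<alpha>"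
  by (cases \<alpha>; simp add: qmat_computation; (simp add: algebra_simps of_real_sqrt2_sq')?)

lemma eigenframe_overlap:
  "qmat_mult (qmat_adj (eigenframe AX)) (eigenframe AY) = vbond"
  "qmat_mult (qmat_adj (eigenframe AY)) (eigenframe AZ) = vbond"
  "qmat_mult (qmat_adj (eigenframe AZ)) (eigenframe AX) = vbond"
  by (simp add: qmat_computation; (simp add: algebra_simps of_real_sqrt2_sq')?)+

definition frame :: "'v set \<Rightarrow> axis \<Rightarrow> 'v op" where
  "frame Vs \<alpha> = op_tensor Vs (\<lambda>_. eigenframe \<alpha>)"

definition coframe :: "'v set \<Rightarrow> axis \<Rightarrow> 'v op" where
  "coframe Vs \<alpha> = op_tensor Vs (\<lambda>_. qmat_adj (eigenframe \<alpha>))"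

lemma frame_coframe: "finite Vs \<Longrightarrow> op_eq Vs (op_mult Vs (frame Vs \<alpha>) (coframe Vs \<alpha>)) op_id"
  and coframe_frame: "finite Vs \<Longrightarrow> op_eq Vs (op_mult Vs (coframe Vs \<alpha>) (frame Vs \<alpha>)) op_id"
  by (simp_all add: frame_def coframe_def op_tensor_mult_eq_id eigenframe_unitary)

lemma coframe_frame_overlap:
  assumes "finite Vs"
  shows "op_mult Vs (coframe Vs AX) (frame Vs AY) = op_tensor Vs (\<lambda>_. vbond)"
    and "op_mult Vs (coframe Vs AY) (frame Vs AZ) = op_tensor Vs (\<lambda>_. vbond)"
    and "op_mult Vs (coframe Vs AZ) (frame Vs AX) = op_tensor Vs (\<lambda>_. vbond)"
  using assms by (simp_all add: frame_def coframe_def op_tensor_mult eigenframe_overlap)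

definition bond_sum :: "nat \<Rightarrow> nat \<Rightarrow> axis \<Rightarrow> (vtx \<Rightarrow> bool) \<Rightarrow> complex" where
  "bond_sum Lx Ly \<alpha> s = (\<Sum>(v, w)\<in>links Lx Ly \<alpha>. of_int (spin (s v) * spin (s w)))"

lemma finite_verts: "finite (verts Lx Ly)"
proof -
  have "verts Lx Ly = {..<Lx} \<times> {..<Ly} \<times> {..<4}"
    by (auto simp: verts_def)
  then show ?thesis by simp
qed

lemma card_verts: "card (verts Lx Ly) = 4 * (Lx * Ly)"
proof -
  have "verts Lx Ly = {..<Lx} \<times> {..<Ly} \<times> {..<4}"
    by (auto simp: verts_def)
  then show ?thesis by (simp add: card_cartesian_product)
qed

lemma links_subset_verts:
  assumes "Lx \<ge> 1" "Ly \<ge> 1" "(v, w) \<in> links Lx Ly \<alpha>"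
  shows "v \<in> verts Lx Ly" "w \<in> verts Lx Ly" "v \<noteq> w"
  using assms by (cases \<alpha>; auto simp: links_def verts_def)+

lemma link_sum_diagonalize:
  assumes "Lx \<ge> 1" "Ly \<ge> 1"
  defines "V \<equiv> verts Lx Ly"
  shows "op_eq V (link_sum Lx Ly \<alpha>)
           (op_mult V (frame V \<alpha>) (op_mult V (diag_op (bond_sum Lx Ly \<alpha>)) (coframe V \<alpha>)))"
  unfolding op_eq_def
proof (intro ballI)
  fix t s assume t: "t \<in> basis V" and s: "s \<in> basis V"
  have fin: "finite V" by (simp add: V_def finite_verts)
  have link: "op_mult V (pauli_at \<alpha> v) (pauli_at \<alpha> w) t s
      = (\<Sum>u\<in>basis V. frame V \<alpha> t u * of_int (spin (u v) * spin (u w)) * coframe V \<alpha> u s)"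
    if "(v, w) \<in> links Lx Ly \<alpha>" for v w
  proof -
    have "op_eq V (op_mult V (pauli_at \<alpha> v) (pauli_at \<alpha> w))
       (op_mult V (frame V \<alpha>) (op_mult V (diag_op (\<lambda>s. of_int (spin (s v) * spin (s w)))) (coframe V \<alpha>)))"
      unfolding frame_def coframe_def using links_subset_verts[OF assms(1,2) that]
      by (intro pauli_pair_diagonalize fin eigenframe_unitary eigenframe_diagonalizes) (simp_all add: V_def)
    then show ?thesis
      using t s by (simp add: op_eq_def op_mult_diag_entry fin)
  qed
  have "link_sum Lx Ly \<alpha> t s
      = (\<Sum>(v, w)\<in>links Lx Ly \<alpha>. \<Sum>u\<in>basis V. frame V \<alpha> t u * of_int (spin (u v) * spin (u w)) * coframe V \<alpha> u s)"
    unfolding link_sum_def V_def[symmetric] by (intro sum.cong refl) (auto simp: link)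
  also have "\<dots> = (\<Sum>u\<in>basis V. frame V \<alpha> t u * bond_sum Lx Ly \<alpha> u * coframe V \<alpha> u s)"
    unfolding bond_sum_def by (simp add: case_prod_beta sum_distrib_left sum_distrib_right) (rule sum.swap)
  finally show "link_sum Lx Ly \<alpha> t s
      = op_mult V (frame V \<alpha>) (op_mult V (diag_op (bond_sum Lx Ly \<alpha>)) (coframe V \<alpha>)) t s"
    by (simp add: op_mult_diag_entry fin)
qed

lemma op_exp_link_sum:
  assumes "Lx \<ge> 1" "Ly \<ge> 1"
  defines "V \<equiv> verts Lx Ly"
  shows "op_eq V (op_exp V (op_scale K (link_sum Lx Ly \<alpha>)))
           (op_mult V (frame V \<alpha>) (op_mult V (diag_op (\<lambda>s. exp (K * bond_sum Lx Ly \<alpha> s))) (coframe V \<alpha>)))"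
proof -
  have fin: "finite V" by (simp add: V_def finite_verts)
  have "op_eq V (op_scale K (link_sum Lx Ly \<alpha>))
      (op_scale K (op_mult V (frame V \<alpha>) (op_mult V (diag_op (bond_sum Lx Ly \<alpha>)) (coframe V \<alpha>))))"
    unfolding V_def by (intro op_scale_cong link_sum_diagonalize assms)
  also have "\<dots> = op_mult V (frame V \<alpha>) (op_mult V (diag_op (\<lambda>s. K * bond_sum Lx Ly \<alpha> s)) (coframe V \<alpha>))"
    by (simp add: fun_eq_iff op_scale_def op_mult_diag_entry fin sum_distrib_left mult_ac)
  finally have "op_eq V (op_exp V (op_scale K (link_sum Lx Ly \<alpha>))) (op_exp V \<dots>)"
    by (rule op_exp_cong)
  also have "op_eq V \<dots> (op_mult V (frame V \<alpha>) (op_mult V (diag_op (\<lambda>s. exp (K * bond_sum Lx Ly \<alpha> s))) (coframe V \<alpha>)))"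
    by (intro op_exp_conj_diag fin frame_coframe coframe_frame)
  finally show ?thesis .
qed

section \<open>Traces of products as sums over periodic histories\<close>

fun op_prod :: "'v set \<Rightarrow> (nat \<Rightarrow> 'v op) \<Rightarrow> nat \<Rightarrow> 'v op" where
  "op_prod Vs A 0 = op_id"
| "op_prod Vs A (Suc n) = op_mult Vs (op_prod Vs A n) (A n)"

text \<open>A state \<open>S\<close> on \<open>{..k} \<times> Vs\<close> is a history of \<open>k + 1\<close> basis states of \<open>Vs\<close>,
  the \<open>t\<close>-th one being \<open>slice S t\<close>.\<close>

definition slice :: "(nat \<times> 'v \<Rightarrow> bool) \<Rightarrow> nat \<Rightarrow> 'v \<Rightarrow> bool" where
  "slice S t = (\<lambda>v. S (t, v))"

definition set_slice :: "nat \<Rightarrow> ('v \<Rightarrow> bool) \<Rightarrow> (nat \<times> 'v \<Rightarrow> bool) \<Rightarrow> nat \<times> 'v \<Rightarrow> bool" where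
  "set_slice n b S = (\<lambda>p. if fst p = n then b (snd p) else S p)"

definition paths :: "'v set \<Rightarrow> nat \<Rightarrow> ('v \<Rightarrow> bool) \<Rightarrow> ('v \<Rightarrow> bool) \<Rightarrow> (nat \<times> 'v \<Rightarrow> bool) set" where
  "paths Vs k a b = {S \<in> basis ({..k} \<times> Vs). slice S 0 = a \<and> slice S k = b}"

lemma finite_paths: "finite Vs \<Longrightarrow> finite (paths Vs k a b)"
  unfolding paths_def by (rule finite_subset[of _ "basis ({..k} \<times> Vs)"]) (auto intro: finite_basis)

lemma paths_0:
  fixes Vs :: "'v set"
  assumes "a \<in> basis Vs"
  shows "paths Vs 0 a b = (if a = b then {set_slice 0 a (\<lambda>_. False)} else {})"
proof -
  have unique: "S = set_slice 0 a (\<lambda>_. False)" if "S \<in> paths Vs 0 a b" for S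
  proof
    fix p :: "nat \<times> 'v"
    obtain t v where p: "p = (t, v)" by (cases p)
    have S: "S \<in> basis ({..0} \<times> Vs)" "slice S 0 = a"
      using that by (auto simp: paths_def)
    have "S (0, v) = a v"
      using fun_cong[OF S(2), of v] by (simp add: slice_def)
    then show "S p = set_slice 0 a (\<lambda>_. False) p"
      using S(1) p by (cases "t = 0") (auto simp: basis_def set_slice_def)
  qed
  show ?thesis
  proof (cases "a = b")
    case True
    have "set_slice 0 a (\<lambda>_. False) \<in> paths Vs 0 a b"
      using assms True by (auto simp: paths_def basis_def slice_def set_slice_def)
    with unique True show ?thesis
      by (metis empty_iff insertI1 subset_antisym subset_singletonD subsetI)
  qed (auto simp: paths_def)
qed

lemma bij_betw_paths_Suc:
  assumes "b \<in> basis Vs"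
  shows "bij_betw (\<lambda>(u, S). set_slice (Suc k) b S) (Sigma (basis Vs) (paths Vs k a)) (paths Vs (Suc k) a b)"
proof (rule bij_betw_byWitness[where f'="\<lambda>S. (slice S k, set_slice (Suc k) (\<lambda>_. False) S)"])
  show "\<forall>x\<in>Sigma (basis Vs) (paths Vs k a).
          (\<lambda>S. (slice S k, set_slice (Suc k) (\<lambda>_. False) S)) ((\<lambda>(u, S). set_slice (Suc k) b S) x) = x"
    by (auto simp: paths_def basis_def set_slice_def slice_def fun_eq_iff)
  show "\<forall>S\<in>paths Vs (Suc k) a b.
          (\<lambda>(u, S). set_slice (Suc k) b S) (slice S k, set_slice (Suc k) (\<lambda>_. False) S) = S"
    by (auto simp: paths_def set_slice_def slice_def fun_eq_iff)
  show "(\<lambda>(u, S). set_slice (Suc k) b S) ` Sigma (basis Vs) (paths Vs k a) \<subseteq> paths Vs (Suc k) a b"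
    using assms by (auto simp: paths_def basis_def set_slice_def slice_def fun_eq_iff le_Suc_eq)
  show "(\<lambda>S. (slice S k, set_slice (Suc k) (\<lambda>_. False) S)) ` paths Vs (Suc k) a b
          \<subseteq> Sigma (basis Vs) (paths Vs k a)"
    by (auto simp: paths_def basis_def set_slice_def slice_def fun_eq_iff le_Suc_eq)
qed

lemma op_prod_path_sum:
  assumes fin: "finite Vs" and "a \<in> basis Vs" "b \<in> basis Vs"
  shows "op_prod Vs A k a b = (\<Sum>S\<in>paths Vs k a b. \<Prod>t<k. A t (slice S t) (slice S (Suc t)))"
  using assms(3)
proof (induction k arbitrary: b)
  case 0
  then show ?case by (simp add: paths_0[OF assms(2)] op_id_def)
next
  case (Suc k)
  let ?w = "\<lambda>k S. \<Prod>t<k. A t (slice S t) (slice S (Suc t))"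
  have "op_prod Vs A (Suc k) a b = (\<Sum>u\<in>basis Vs. \<Sum>S\<in>paths Vs k a u. ?w k S * A k u b)"
    using Suc.IH by (simp add: op_mult_def sum_distrib_right)
  also have "\<dots> = (\<Sum>(u, S)\<in>Sigma (basis Vs) (paths Vs k a). ?w k S * A k u b)"
    using fin by (intro sum.Sigma) (auto intro: finite_basis finite_paths)
  also have "\<dots> = (\<Sum>(u, S)\<in>Sigma (basis Vs) (paths Vs k a). ?w (Suc k) (set_slice (Suc k) b S))"
  proof (intro sum.cong refl, clarify)
    fix u S assume "S \<in> paths Vs k a u"
    then have "slice (set_slice (Suc k) b S) k = u" "slice (set_slice (Suc k) b S) (Suc k) = b"
      by (auto simp: paths_def slice_def set_slice_def)
    moreover have "?w k (set_slice (Suc k) b S) = ?w k S"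
      by (intro prod.cong refl) (auto simp: slice_def set_slice_def)
    ultimately show "?w k S * A k u b = ?w (Suc k) (set_slice (Suc k) b S)"
      by simp
  qed
  also have "\<dots> = (\<Sum>S\<in>paths Vs (Suc k) a b. ?w (Suc k) S)"
    using sum.reindex_bij_betw[OF bij_betw_paths_Suc[OF Suc.prems], of "?w (Suc k)"]
    by (simp add: case_prod_beta')
  finally show ?case .
qed

lemma bij_betw_closed_paths:
  assumes "n \<ge> 1"
  shows "bij_betw (\<lambda>(a, S). set_slice n (\<lambda>_. False) S)
           (Sigma (basis Vs) (\<lambda>a. paths Vs n a a)) (basis ({..<n} \<times> Vs))"
proof (rule bij_betw_byWitness[where f'="\<lambda>S. (slice S 0, set_slice n (slice S 0) S)"])
  show "\<forall>x\<in>Sigma (basis Vs) (\<lambda>a. paths Vs n a a).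
          (\<lambda>S. (slice S 0, set_slice n (slice S 0) S)) ((\<lambda>(a, S). set_slice n (\<lambda>_. False) S) x) = x"
    using assms by (auto simp: paths_def basis_def set_slice_def slice_def fun_eq_iff)
  show "\<forall>S\<in>basis ({..<n} \<times> Vs).
          (\<lambda>(a, S). set_slice n (\<lambda>_. False) S) (slice S 0, set_slice n (slice S 0) S) = S"
    by (auto simp: basis_def set_slice_def fun_eq_iff)
  show "(\<lambda>(a, S). set_slice n (\<lambda>_. False) S) ` Sigma (basis Vs) (\<lambda>a. paths Vs n a a) \<subseteq> basis ({..<n} \<times> Vs)"
    by (auto simp: paths_def basis_def set_slice_def)
  show "(\<lambda>S. (slice S 0, set_slice n (slice S 0) S)) ` basis ({..<n} \<times> Vs) \<subseteq> Sigma (basis Vs) (\<lambda>a. paths Vs n a a)"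
    using assms by (auto simp: paths_def basis_def set_slice_def slice_def fun_eq_iff)
qed

lemma op_trace_op_prod:
  assumes fin: "finite Vs" and n: "n \<ge> 1"
  shows "op_trace Vs (op_prod Vs A n)
       = (\<Sum>S\<in>basis ({..<n} \<times> Vs). \<Prod>t<n. A t (slice S t) (slice S (Suc t mod n)))"
proof -
  let ?w = "\<lambda>S. \<Prod>t<n. A t (slice S t) (slice S (Suc t mod n))"
  have "op_trace Vs (op_prod Vs A n) = (\<Sum>a\<in>basis Vs. \<Sum>S\<in>paths Vs n a a. \<Prod>t<n. A t (slice S t) (slice S (Suc t)))"
    unfolding op_trace_def using op_prod_path_sum[OF fin] by simp
  also have "\<dots> = (\<Sum>(a, S)\<in>Sigma (basis Vs) (\<lambda>a. paths Vs n a a). \<Prod>t<n. A t (slice S t) (slice S (Suc t)))"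
    using fin by (intro sum.Sigma) (auto intro: finite_basis finite_paths)
  also have "\<dots> = (\<Sum>(a, S)\<in>Sigma (basis Vs) (\<lambda>a. paths Vs n a a). ?w (set_slice n (\<lambda>_. False) S))"
  proof (intro sum.cong refl, clarify, intro prod.cong refl)
    fix a S t assume S: "S \<in> paths Vs n a a" and "t \<in> {..<n}"
    then have "Suc t < n \<or> Suc t = n" by auto
    then show "A t (slice S t) (slice S (Suc t))
        = A t (slice (set_slice n (\<lambda>_. False) S) t) (slice (set_slice n (\<lambda>_. False) S) (Suc t mod n))"
      using S \<open>t \<in> {..<n}\<close> by (auto simp: paths_def slice_def set_slice_def)
  qed
  also have "\<dots> = (\<Sum>S\<in>basis ({..<n} \<times> Vs). ?w S)"
    using sum.reindex_bij_betw[OF bij_betw_closed_paths[OF n], of ?w]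
    by (simp add: case_prod_beta')
  finally show ?thesis .
qed

section \<open>The quantum transfer matrix as a product of classical layers\<close>

text \<open>The classical transfer matrix from plane \<open>t\<close> to plane \<open>t + 1\<close> at \<open>\<beta>J\<^sub>\<perp> = \<beta>h = \<pi>i/4\<close>,
  with each vertical bond weight divided by \<open>bond_norm\<close>.\<close>

definition layer_op :: "nat \<Rightarrow> nat \<Rightarrow> complex \<Rightarrow> complex \<Rightarrow> complex \<Rightarrow> nat \<Rightarrow> vtx op" where
  "layer_op Lx Ly Kx Ky Kz t = op_mult (verts Lx Ly)
     (diag_op (\<lambda>s. exp (coupling Kx Ky Kz (plane_type t) * bond_sum Lx Ly (plane_type t) s)))
     (op_tensor (verts Lx Ly) (\<lambda>_. vbond))"

lemma layer_op_periodic: "layer_op Lx Ly Kx Ky Kz (t + 3) = layer_op Lx Ly Kx Ky Kz t"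
  by (simp add: layer_op_def plane_type_def)

lemma op_pow_eq_op_prod:
  assumes periodic: "\<And>t. A (t + 3) = A t"
  shows "op_pow Vs (op_mult Vs (A 0) (op_mult Vs (A 1) (A 2))) k = op_prod Vs A (3 * k)"
proof -
  have shift: "A (3 * k + j) = A j" for k j
  proof (induction k)
    case (Suc k)
    then show ?case
      using periodic[of "3 * k + j"] by (simp add: algebra_simps)
  qed simp
  show ?thesis
  proof (induction k)
    case (Suc k)
    then show ?case
      using shift[of k 0] shift[of k 1] shift[of k 2] by (simp add: op_mult_assoc numeral_3_eq_3)
  qed simp
qed

lemma op_mult_conj_cycle:
  assumes fin: "finite Vs" and UW: "op_eq Vs (op_mult Vs U0 W0) op_id"
  defines "m \<equiv> op_mult Vs"
  shows "op_eq Vs (m (m (m U0 (m D0 W0)) (m U1 (m D1 W1))) (m U2 (m D2 W2)))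
                  (m U0 (m (m (m D0 (m W0 U1)) (m (m D1 (m W1 U2)) (m D2 (m W2 U0)))) W0))"
proof -
  let ?T = "m (m (m U0 (m D0 W0)) (m U1 (m D1 W1))) (m U2 (m D2 W2))"
  have "op_eq Vs ?T (m ?T op_id)"
    unfolding m_def by (rule op_eq_sym[OF op_mult_id_right[OF fin]])
  also have "op_eq Vs \<dots> (m ?T (m U0 W0))"
    unfolding m_def by (intro op_mult_cong op_eq_refl op_eq_sym[OF UW])
  also have "\<dots> = m U0 (m (m (m D0 (m W0 U1)) (m (m D1 (m W1 U2)) (m D2 (m W2 U0)))) W0)"
    by (simp add: m_def op_mult_assoc)
  finally show ?thesis .
qed

lemma trace_transfer_pow:
  assumes "Lx \<ge> 1" "Ly \<ge> 1"
  defines "V \<equiv> verts Lx Ly"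
  shows "op_trace V (op_pow V (transfer Lx Ly Kx Ky Kz) M)
       = op_trace V (op_prod V (layer_op Lx Ly Kx Ky Kz) (3 * M))"
proof -
  let ?m = "op_mult V" and ?L = "layer_op Lx Ly Kx Ky Kz"
  define D where "D K \<alpha> = diag_op (\<lambda>s. exp (K * bond_sum Lx Ly \<alpha> s))" for K \<alpha>
  have fin: "finite V" by (simp add: V_def finite_verts)
  have layers: "?L 0 = ?m (D Kx AX) (?m (coframe V AX) (frame V AY))"
               "?L 1 = ?m (D Ky AY) (?m (coframe V AY) (frame V AZ))"
               "?L 2 = ?m (D Kz AZ) (?m (coframe V AZ) (frame V AX))"
    by (simp_all add: layer_op_def D_def V_def coframe_frame_overlap finite_verts plane_type_def coupling_def)
  have "op_eq V (transfer Lx Ly Kx Ky Kz)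
      (?m (?m (?m (frame V AX) (?m (D Kx AX) (coframe V AX))) (?m (frame V AY) (?m (D Ky AY) (coframe V AY))))
          (?m (frame V AZ) (?m (D Kz AZ) (coframe V AZ))))"
    unfolding transfer_def Let_def V_def D_def
    by (intro op_mult_cong op_exp_link_sum assms)
  also have "op_eq V \<dots> (?m (frame V AX) (?m (?m (?L 0) (?m (?L 1) (?L 2))) (coframe V AX)))"
    unfolding layers by (intro op_mult_conj_cycle fin frame_coframe)
  finally have "op_trace V (op_pow V (transfer Lx Ly Kx Ky Kz) M)
      = op_trace V (op_pow V (?m (frame V AX) (?m (?m (?L 0) (?m (?L 1) (?L 2))) (coframe V AX))) M)"
    by (intro op_trace_cong op_pow_cong)
  also have "\<dots> = op_trace V (?m (frame V AX) (?m (op_pow V (?m (?L 0) (?m (?L 1) (?L 2))) M) (coframe V AX)))"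
    by (intro op_trace_cong op_pow_conj fin frame_coframe coframe_frame)
  also have "\<dots> = op_trace V (op_pow V (?m (?L 0) (?m (?L 1) (?L 2))) M)"
    by (rule op_trace_conj[OF fin coframe_frame[OF fin]])
  also have "\<dots> = op_trace V (op_prod V ?L (3 * M))"
    by (simp only: op_pow_eq_op_prod[where A="?L", OF layer_op_periodic])
  finally show ?thesis .
qed

section \<open>Weights of histories\<close>

definition bond_norm :: complex where
  "bond_norm = (-1 + \<i>) / 2"

lemma bond_norm_nonzero: "bond_norm \<noteq> 0"
  by (simp add: bond_norm_def complex_eq_iff)

lemma bond_norm_polar: "complex_of_real (1 / sqrt 2) * exp (3 * pi * \<i> / 4) = bond_norm"
proof -
  have "3 * pi / 4 = pi - pi / 4" by simp
  then have "cos (3 * pi / 4) = - (sqrt 2 / 2)" "sin (3 * pi / 4) = sqrt 2 / 2"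
    by (simp_all only: cos_pi_minus sin_pi_minus cos_45 sin_45)
  moreover have "exp (3 * pi * \<i> / 4) = cis (3 * pi / 4)"
    by (simp add: cis_conv_exp mult_ac)
  ultimately show ?thesis
    by (simp add: complex_eq_iff bond_norm_def)
qed

lemma vbond_exp:
  "vbond a b = bond_norm * exp (pi * \<i> / 4 * of_int (spin a * spin b) - pi * \<i> / 8 * of_int (spin a + spin b))"
proof -
  have "exp (pi * \<i> / 2) = \<i>"
    using exp_Euler[of "pi / 2"] by (simp add: mult.commute)
  moreover have "exp (- (pi * \<i> / 4)) = cis (- (pi / 4))"
    by (simp add: cis_conv_exp mult.commute)
  moreover have "cis (- (pi / 4)) = (1 - \<i>) / sqrt 2"
    by (simp add: complex_eq_iff cos_45 sin_45 Re_divide_of_real Im_divide_of_real real_div_sqrt)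
  moreover have "pi * \<i> / 4 * of_int (spin a * spin b) - pi * \<i> / 8 * of_int (spin a + spin b)
      = (if a = b then (if a then pi * \<i> / 2 else 0) else - (pi * \<i> / 4))"
    by (auto simp: spin_def field_simps)
  ultimately have "exp (pi * \<i> / 4 * of_int (spin a * spin b) - pi * \<i> / 8 * of_int (spin a + spin b))
      = (if a = b then (if a then \<i> else 1) else (1 - \<i>) / sqrt 2)"
    by simp
  then show ?thesis
    by (auto simp: vbond_def bond_norm_def field_simps of_real_sqrt2_sq)
qed

lemma layer_op_entry:
  assumes "a \<in> basis (verts Lx Ly)"
  shows "layer_op Lx Ly Kx Ky Kz t a b
       = exp (coupling Kx Ky Kz (plane_type t) * bond_sum Lx Ly (plane_type t) a)
         * (\<Prod>v\<in>verts Lx Ly. vbond (a v) (b v))"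
  using assms finite_basis[OF finite_verts]
  by (simp add: layer_op_def op_mult_def diag_op_def op_tensor_def if_distrib[where f="\<lambda>x. x * _"]
      cong: if_cong)

lemma bij_betw_Suc_mod:
  assumes "n \<ge> 1"
  shows "bij_betw (\<lambda>t. Suc t mod n) {..<n} {..<n}"
proof -
  have Suc_mod: "Suc t mod n = (if Suc t = n then 0 else Suc t)" if "t < n" for t
    using that by auto
  have "inj_on (\<lambda>t. Suc t mod n) {..<n}"
    by (rule inj_onI) (simp add: Suc_mod split: if_splits)
  moreover have "(\<lambda>t. Suc t mod n) ` {..<n} \<subseteq> {..<n}"
    using assms by auto
  ultimately show ?thesis
    by (simp add: bij_betw_def endo_inj_surj)
qed

lemma prod_cyclic_bonds:
  fixes f :: "nat \<Rightarrow> 'v \<Rightarrow> complex"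
  assumes "finite V" "n \<ge> 1"
  shows "(\<Prod>t<n. \<Prod>v\<in>V. c * exp (a * (f t v * f (Suc t mod n) v) - b * (f t v + f (Suc t mod n) v)))
       = c ^ (n * card V) * exp (a * (\<Sum>t<n. \<Sum>v\<in>V. f t v * f (Suc t mod n) v) - 2 * b * (\<Sum>t<n. \<Sum>v\<in>V. f t v))"
proof -
  have shift: "(\<Sum>t<n. \<Sum>v\<in>V. f (Suc t mod n) v) = (\<Sum>t<n. \<Sum>v\<in>V. f t v)"
    using sum.reindex_bij_betw[OF bij_betw_Suc_mod[OF assms(2)], of "\<lambda>t. \<Sum>v\<in>V. f t v"] .
  have "(\<Prod>t<n. \<Prod>v\<in>V. c * exp (a * (f t v * f (Suc t mod n) v) - b * (f t v + f (Suc t mod n) v)))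
      = c ^ (n * card V) * exp (\<Sum>t<n. \<Sum>v\<in>V. a * (f t v * f (Suc t mod n) v) - b * (f t v + f (Suc t mod n) v))"
    using assms(1) by (simp add: prod.distrib exp_sum mult.commute[of n] power_mult)
  also have "(\<Sum>t<n. \<Sum>v\<in>V. a * (f t v * f (Suc t mod n) v) - b * (f t v + f (Suc t mod n) v))
      = a * (\<Sum>t<n. \<Sum>v\<in>V. f t v * f (Suc t mod n) v)
        - b * ((\<Sum>t<n. \<Sum>v\<in>V. f t v) + (\<Sum>t<n. \<Sum>v\<in>V. f (Suc t mod n) v))"
    by (simp add: sum_subtractf sum.distrib sum_distrib_left distrib_left)
  also have "\<dots> = a * (\<Sum>t<n. \<Sum>v\<in>V. f t v * f (Suc t mod n) v) - 2 * b * (\<Sum>t<n. \<Sum>v\<in>V. f t v)"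
    by (simp add: shift)
  finally show ?thesis .
qed

lemma path_weight:
  assumes "M \<ge> 1" and S: "S \<in> basis ({..<3 * M} \<times> verts Lx Ly)"
  shows "(\<Prod>t<3 * M. layer_op Lx Ly Kx Ky Kz t (slice S t) (slice S (Suc t mod (3 * M))))
       = bond_norm ^ (12 * M * (Lx * Ly))
         * exp (energy Lx Ly M Kx Ky Kz (pi * \<i> / 4) (pi * \<i> / 4) (\<lambda>p. spin (S p)))"
proof -
  let ?n = "3 * M" and ?V = "verts Lx Ly"
  define f where "f t v = (of_int (spin (S (t, v))) :: complex)" for t v
  define planes where "planes = (\<Sum>t<?n. coupling Kx Ky Kz (plane_type t) *
      (\<Sum>(v, w)\<in>links Lx Ly (plane_type t). of_int (spin (S (t, v)) * spin (S (t, w)))))"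
  have "slice S t \<in> basis ?V" for t
    using S by (auto simp: slice_def basis_def)
  then have "(\<Prod>t<?n. layer_op Lx Ly Kx Ky Kz t (slice S t) (slice S (Suc t mod ?n)))
      = exp planes * (\<Prod>t<?n. \<Prod>v\<in>?V. bond_norm * exp (pi * \<i> / 4 * (f t v * f (Suc t mod ?n) v)
                                                   - pi * \<i> / 8 * (f t v + f (Suc t mod ?n) v)))"
    by (simp add: layer_op_entry prod.distrib exp_sum planes_def bond_sum_def slice_def vbond_exp f_def
        case_prod_beta)
  also have "\<dots> = exp planes * (bond_norm ^ (?n * card ?V) * exp (pi * \<i> / 4 * (\<Sum>t<?n. \<Sum>v\<in>?V. f t v * f (Suc t mod ?n) v)
      - 2 * (pi * \<i> / 8) * (\<Sum>t<?n. \<Sum>v\<in>?V. f t v)))"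
    using assms(1) by (simp only: prod_cyclic_bonds finite_verts)
  also have "\<dots> = bond_norm ^ (12 * M * (Lx * Ly)) * exp (planes
      + pi * \<i> / 4 * (\<Sum>t<?n. \<Sum>v\<in>?V. f t v * f (Suc t mod ?n) v) - pi * \<i> / 4 * (\<Sum>t<?n. \<Sum>v\<in>?V. f t v))"
  proof -
    have "2 * (pi * \<i> / 8) = pi * \<i> / 4" by simp
    then show ?thesis
      by (simp add: card_verts exp_add mult_ac flip: add_diff_eq)
  qed
  also have "planes + pi * \<i> / 4 * (\<Sum>t<?n. \<Sum>v\<in>?V. f t v * f (Suc t mod ?n) v) - pi * \<i> / 4 * (\<Sum>t<?n. \<Sum>v\<in>?V. f t v)
      = energy Lx Ly M Kx Ky Kz (pi * \<i> / 4) (pi * \<i> / 4) (\<lambda>p. spin (S p))"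
    by (simp add: energy_def planes_def f_def sites_def sum.cartesian_product case_prod_beta)
  finally show ?thesis .
qed

section \<open>Admissible vertical couplings and fields\<close>

lemma exp_half_pi_cyclic_bonds:
  fixes f :: "nat \<Rightarrow> int"
  assumes "n \<ge> 1" and pm: "\<And>t. t < n \<Longrightarrow> f t \<in> {-1, 1}"
  shows "exp (pi * \<i> / 2 * (\<Sum>t<n. of_int (f t * f (Suc t mod n)))) = \<i> ^ n"
proof -
  have exp_bond: "exp (pi * \<i> / 2 * of_int x) = \<i> * of_int x" if "x \<in> {-1, 1}" for x :: int
  proof -
    have "exp (pi * \<i> / 2) = \<i>"
      using exp_Euler[of "pi / 2"] by (simp add: mult.commute)
    then show ?thesis
      using that by (auto simp: exp_minus)
  qed
  have cycle: "(\<Prod>t<n. f t * f (Suc t mod n)) = 1"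
  proof -
    have "(\<Prod>t<n. f t * f (Suc t mod n)) = (\<Prod>t<n. f t) * (\<Prod>t<n. f t)"
      using prod.reindex_bij_betw[OF bij_betw_Suc_mod[OF assms(1)], of f] by (simp add: prod.distrib)
    also have "\<dots> = (\<Prod>t<n. f t * f t)"
      by (simp add: prod.distrib)
    also have "\<dots> = 1"
    proof (intro prod.neutral ballI)
      fix t assume "t \<in> {..<n}"
      then have "f t \<in> {-1, 1}" by (intro pm) simp
      then show "f t * f t = 1" by auto
    qed
    finally show ?thesis .
  qed
  have "f t * f (Suc t mod n) \<in> {-1, 1}" if "t < n" for t
    using pm[OF that] pm[of "Suc t mod n"] assms(1) by auto
  then have "exp (pi * \<i> / 2 * (\<Sum>t<n. of_int (f t * f (Suc t mod n))))
      = (\<Prod>t<n. \<i> * of_int (f t * f (Suc t mod n)))"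
    unfolding sum_distrib_left by (simp only: exp_sum finite_lessThan) (intro prod.cong refl exp_bond, simp)
  also have "\<dots> = \<i> ^ n * of_int (\<Prod>t<n. f t * f (Suc t mod n))"
    by (simp only: prod.distrib[of "\<lambda>_. \<i>"] prod_constant card_lessThan of_int_prod)
  also have "\<dots> = \<i> ^ n"
    by (simp only: cycle of_int_1 mult_1_right)
  finally show ?thesis .
qed

lemma exp_pi_spin_sum:
  fixes f :: "'a \<Rightarrow> int"
  assumes "finite A" and "\<And>x. x \<in> A \<Longrightarrow> f x \<in> {-1, 1}"
  shows "exp (pi * \<i> * (\<Sum>x\<in>A. of_int (f x))) = (-1) ^ card A"
proof -
  have "exp (pi * \<i> * of_int (f x)) = -1" if "x \<in> A" for x
    using assms(2)[OF that] by (auto simp: exp_minus)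
  then show ?thesis
    using assms(1) by (simp add: sum_distrib_left exp_sum)
qed

lemma exp_energy_shift:
  assumes "M \<ge> 1" and \<sigma>: "\<sigma> \<in> spin_configs Lx Ly M"
    and "\<exists>k::int. 4 * bJ = pi * \<i> + 2 * pi * \<i> * of_int k"
    and "\<exists>k::int. 2 * bh = pi * \<i> / 2 + 2 * pi * \<i> * of_int k"
  shows "exp (energy Lx Ly M Kx Ky Kz bJ bh \<sigma>) = exp (energy Lx Ly M Kx Ky Kz (pi * \<i> / 4) (pi * \<i> / 4) \<sigma>)"
proof -
  let ?n = "3 * M" and ?V = "verts Lx Ly"
  obtain k k' :: int where bJ: "bJ = pi * \<i> / 4 + of_int k * (pi * \<i> / 2)"
    and bh: "bh = pi * \<i> / 4 + of_int k' * (pi * \<i>)"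
    using assms(3,4) by (auto simp: field_simps)
  define A where "A = (\<Sum>v\<in>?V. \<Sum>t<?n. (of_int (\<sigma> (t, v) * \<sigma> (Suc t mod ?n, v)) :: complex))"
  define B where "B = (\<Sum>i\<in>sites Lx Ly M. (of_int (\<sigma> i) :: complex))"
  have pm: "\<sigma> i \<in> {-1, 1}" if "i \<in> sites Lx Ly M" for i
    using \<sigma> that by (auto simp: spin_configs_def)
  have "pi * \<i> / 2 * A = (\<Sum>v\<in>?V. pi * \<i> / 2 * (\<Sum>t<?n. of_int (\<sigma> (t, v) * \<sigma> (Suc t mod ?n, v))))"
    by (simp add: A_def sum_distrib_left)
  then have "exp (pi * \<i> / 2 * A) = (\<Prod>v\<in>?V. exp (pi * \<i> / 2 * (\<Sum>t<?n. of_int (\<sigma> (t, v) * \<sigma> (Suc t mod ?n, v)))))"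
    by (simp add: exp_sum finite_verts)
  also have "\<dots> = (\<Prod>v\<in>?V. \<i> ^ ?n)"
    using assms(1) pm by (intro prod.cong refl exp_half_pi_cyclic_bonds) (auto simp: sites_def)
  also have "\<dots> = (\<i> ^ 4) ^ (3 * M * (Lx * Ly))"
    by (simp add: card_verts flip: power_mult)
  finally have A: "exp (pi * \<i> / 2 * A) = 1" by simp
  have "exp (pi * \<i> * B) = (-1) ^ (2 * (6 * M * (Lx * Ly)))"
    unfolding B_def using pm
    by (simp add: exp_pi_spin_sum sites_def finite_verts card_cartesian_product card_verts)
  then have B: "exp (pi * \<i> * B) = 1"
    by (simp add: power_mult)
  have "energy Lx Ly M Kx Ky Kz bJ bh \<sigma>
      = energy Lx Ly M Kx Ky Kz (pi * \<i> / 4) (pi * \<i> / 4) \<sigma> + (of_int k * (pi * \<i> / 2 * A) + of_int (- k') * (pi * \<i> * B))"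
    unfolding energy_def A_def B_def bJ bh by (simp add: sum.swap[of _ ?V] algebra_simps)
  then show ?thesis
    by (simp only: exp_add A B power_int_1_left mult_1_right flip: exp_power_int)
qed

lemma bij_betw_spin_configs:
  "bij_betw (\<lambda>S p. spin (S p)) (basis (sites Lx Ly M)) (spin_configs Lx Ly M)"
  by (rule bij_betw_byWitness[where f'="\<lambda>\<sigma> p. p \<in> sites Lx Ly M \<and> \<sigma> p = -1"])
    (auto simp: basis_def spin_configs_def spin_def fun_eq_iff split: if_splits)

theorem mainTheorem3:
  "\<exists>C :: nat \<Rightarrow> nat \<Rightarrow> complex \<Rightarrow> complex \<Rightarrow> complex.
     (\<forall>Lx Ly M Kx Ky Kz bJ bh.
        Lx \<ge> 1 \<longrightarrow> Ly \<ge> 1 \<longrightarrow> M \<ge> 1 \<longrightarrow>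
        (\<exists>k::int. 4 * bJ = pi * \<i> + 2 * pi * \<i> * of_int k) \<longrightarrow>
        (\<exists>k::int. 2 * bh = pi * \<i> / 2 + 2 * pi * \<i> * of_int k) \<longrightarrow>
        C M (Lx * Ly) bJ bh \<noteq> 0 \<and>
        op_trace (verts Lx Ly) (op_pow (verts Lx Ly) (transfer Lx Ly Kx Ky Kz) M)
          = C M (Lx * Ly) bJ bh * partition_fn Lx Ly M Kx Ky Kz bJ bh)
   \<and> (\<forall>M N. M \<ge> 1 \<longrightarrow> N \<ge> 1 \<longrightarrow>
        C M N (pi * \<i> / 4) (pi * \<i> / 4)
          = (complex_of_real (1 / sqrt 2) * exp (3 * pi * \<i> / 4)) ^ (12 * M * N))"
proof (intro exI[where x="\<lambda>M N bJ bh. bond_norm ^ (12 * M * N)"] conjI allI impI)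
  fix Lx Ly M :: nat and Kx Ky Kz bJ bh :: complex
  assume "Lx \<ge> 1" "Ly \<ge> 1" "M \<ge> 1"
    and hJ: "\<exists>k::int. 4 * bJ = pi * \<i> + 2 * pi * \<i> * of_int k"
    and hh: "\<exists>k::int. 2 * bh = pi * \<i> / 2 + 2 * pi * \<i> * of_int k"
  let ?V = "verts Lx Ly" and ?c = "bond_norm ^ (12 * M * (Lx * Ly))"
  show "?c \<noteq> 0"
    by (simp add: bond_norm_nonzero)
  have "op_trace ?V (op_pow ?V (transfer Lx Ly Kx Ky Kz) M)
      = (\<Sum>S\<in>basis ({..<3 * M} \<times> ?V). \<Prod>t<3 * M. layer_op Lx Ly Kx Ky Kz t (slice S t) (slice S (Suc t mod (3 * M))))"
    using trace_transfer_pow[OF \<open>Lx \<ge> 1\<close> \<open>Ly \<ge> 1\<close>] op_trace_op_prod[OF finite_verts, of "3 * M"] \<open>M \<ge> 1\<close>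
    by simp
  also have "\<dots> = (\<Sum>S\<in>basis (sites Lx Ly M). ?c * exp (energy Lx Ly M Kx Ky Kz (pi * \<i> / 4) (pi * \<i> / 4) (\<lambda>p. spin (S p))))"
    using \<open>M \<ge> 1\<close> by (simp add: path_weight sites_def)
  also have "\<dots> = (\<Sum>\<sigma>\<in>spin_configs Lx Ly M. ?c * exp (energy Lx Ly M Kx Ky Kz (pi * \<i> / 4) (pi * \<i> / 4) \<sigma>))"
    by (rule sum.reindex_bij_betw[OF bij_betw_spin_configs])
  also have "\<dots> = ?c * partition_fn Lx Ly M Kx Ky Kz bJ bh"
    using exp_energy_shift[OF \<open>M \<ge> 1\<close> _ hJ hh]
    by (simp add: partition_fn_def sum_distrib_left)
  finally show "op_trace ?V (op_pow ?V (transfer Lx Ly Kx Ky Kz) M) = ?c * partition_fn Lx Ly M Kx Ky Kz bJ bh" .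
qed (simp only: bond_norm_polar)

end
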